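(* Let $\beta>1$ and $\mathbf{L}\in Q^2(\mathbb{D}^2)$. An analytic function $F\colon\mathbb{D}^2\to\mathbb{C}$ has bounded $\mathbf{L}$-index in joint variables if and only if there exist $c\in(0,+\infty)$ and $N\in\mathbb{N}$ such that for each $z\in\mathbb{D}^2$ $$\sum_{0\le k_1+k_2\le N}\frac{|F^{(k_1,k_2)}(z)|}{k_1!k_2!\,l_1^{k_1}(z)l_2^{k_2}(z)}\ge c\sum_{k_1+k_2\ge N+1}\frac{|F^{(k_1,k_2)}(z)|}{k_1!k_2!\,l_1^{k_1}(z)l_2^{k_2}(z)}.$$
   Context: $\mathbb{D}^2=\{(z_1,z_2)\in\mathbb{C}^2:|z_1|<1,|z_2|<1\}$, $\mathbb{Z}_+=\{0,1,2,\dots\}$, $\mathbb{R}_+=[0,\infty)$. $\mathbf{L}(z)=(l_1(z),l_2(z))$, where each $l_j\colon\mathbb{D}^2\to\mathbb{R}_+$ is continuous and satisfies $l_j(z_1,z_2)>\beta/(1-|z_j|)$ for all $(z_1,z_2)\in\mathbb{D}^2$, $j=1,2$. For $z^0\in\mathbb{C}^2$ and $R=(r_1,r_2)\in\mathbb{R}_+^2$: $\mathbb{D}^2[z^0,R]=\{z:|z_j-z_j^0|\le r_j,\ j=1,2\}$ and $\frac{R}{\mathbf{L}(z^0)}=\big(\frac{r_1}{l_1(z^0)},\frac{r_2}{l_2(z^0)}\big)$. $F^{(p,q)}=\frac{\partial^{p+q}F}{\partial z_1^p\partial z_2^q}$. An analytic $F\colon\mathbb{D}^2\to\mathbb{C}$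 has bounded $\mathbf{L}$-index in joint variables if there is $n_0\in\mathbb{Z}_+$ such that for all $z\in\mathbb{D}^2$ and all $(p_1,p_2)\in\mathbb{Z}_+^2$: $\frac{|F^{(p_1,p_2)}(z)|}{p_1!p_2!\,l_1^{p_1}(z)l_2^{p_2}(z)}\le\max\{\frac{|F^{(k_1,k_2)}(z)|}{k_1!k_2!\,l_1^{k_1}(z)l_2^{k_2}(z)}:0\le k_1+k_2\le n_0\}$. $Q^2(\mathbb{D}^2)$ is the class of such $\mathbf{L}$ for which, for all $R=(r_1,r_2)\in[0,\beta]^2$ and $j=1,2$, $0<\lambda_{1,j}(R)\le\lambda_{2,j}(R)<\infty$, where $\lambda_{1,j}(R)=\inf_{z^0\in\mathbb{D}^2}\inf\{l_j(z)/l_j(z^0): z\in\mathbb{D}^2[z^0,R/\mathbf{L}(z^0)]\}$ and $\lambda_{2,j}(R)=\sup_{z^0\in\mathbb{D}^2}\sup\{l_j(z)/l_j(z^0): z\in\mathbb{D}^2[z^0,R/\mathbf{L}(z^0)]\}$. *)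

theory Defs
  imports "HOL-Analysis.Analysis"
begin

definition bidisc :: "(complex \<times> complex) set" where
  "bidisc = {z. cmod (fst z) < 1 \<and> cmod (snd z) < 1}"

definition polydisc :: "complex \<times> complex \<Rightarrow> real \<times> real \<Rightarrow> (complex \<times> complex) set" where
  "polydisc z0 R = {z. cmod (fst z - fst z0) \<le> fst R \<and> cmod (snd z - snd z0) \<le> snd R}"

text \<open>Analytic function on the bidisc: continuous and holomorphic in each variable
  separately (Osgood).\<close>
definition analytic_bidisc :: "(complex \<times> complex \<Rightarrow> complex) \<Rightarrow> bool" where
  "analytic_bidisc F \<longleftrightarrow> continuous_on bidisc F \<and>
     (\<forall>z\<in>bidisc. (\<lambda>w. F (w, snd z)) holomorphic_on ball 0 1 \<and>
                  (\<lambda>v. F (fst z, v)) holomorphic_on ball 0 1)"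

definition pderiv2 :: "(complex \<times> complex \<Rightarrow> complex) \<Rightarrow> nat \<Rightarrow> nat \<Rightarrow> complex \<times> complex \<Rightarrow> complex" where
  "pderiv2 F p q z = (deriv ^^ p) (\<lambda>w. (deriv ^^ q) (\<lambda>v. F (w, v)) (snd z)) (fst z)"

definition Lterm :: "(complex \<times> complex \<Rightarrow> real) \<Rightarrow> (complex \<times> complex \<Rightarrow> real) \<Rightarrow>
     (complex \<times> complex \<Rightarrow> complex) \<Rightarrow> nat \<times> nat \<Rightarrow> complex \<times> complex \<Rightarrow> real" where
  "Lterm l1 l2 F k z = cmod (pderiv2 F (fst k) (snd k) z) /
      (fact (fst k) * fact (snd k) * l1 z ^ fst k * l2 z ^ snd k)"

definition bounded_L_index_joint :: "(complex \<times> complex \<Rightarrow> real) \<Rightarrow> (complex \<times> complex \<Rightarrow> real) \<Rightarrow>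
     (complex \<times> complex \<Rightarrow> complex) \<Rightarrow> bool" where
  "bounded_L_index_joint l1 l2 F \<longleftrightarrow>
     (\<exists>n0::nat. \<forall>z\<in>bidisc. \<forall>p1 p2.
        Lterm l1 l2 F (p1, p2) z \<le> Max ((\<lambda>k. Lterm l1 l2 F k z) ` {k. fst k + snd k \<le> n0}))"

text \<open>lambda_{1,j}(R) and lambda_{2,j}(R), as extended reals; j = 1 uses l1, j = 2 uses l2.\<close>
definition lambda1 :: "(complex \<times> complex \<Rightarrow> real) \<Rightarrow> (complex \<times> complex \<Rightarrow> real) \<Rightarrow>
     (complex \<times> complex \<Rightarrow> real) \<Rightarrow> real \<times> real \<Rightarrow> ereal" where
  "lambda1 l1 l2 lj R = (INF z0\<in>bidisc. INF z\<in>bidisc \<inter> polydisc z0 (fst R / l1 z0, snd R / l2 z0).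
       ereal (lj z / lj z0))"

definition lambda2 :: "(complex \<times> complex \<Rightarrow> real) \<Rightarrow> (complex \<times> complex \<Rightarrow> real) \<Rightarrow>
     (complex \<times> complex \<Rightarrow> real) \<Rightarrow> real \<times> real \<Rightarrow> ereal" where
  "lambda2 l1 l2 lj R = (SUP z0\<in>bidisc. SUP z\<in>bidisc \<inter> polydisc z0 (fst R / l1 z0, snd R / l2 z0).
       ereal (lj z / lj z0))"

definition Q2 :: "real \<Rightarrow> (complex \<times> complex \<Rightarrow> real) \<Rightarrow> (complex \<times> complex \<Rightarrow> real) \<Rightarrow> bool" where
  "Q2 \<beta> l1 l2 \<longleftrightarrow>
     (\<forall>R. 0 \<le> fst R \<and> fst R \<le> \<beta> \<and> 0 \<le> snd R \<and> snd R \<le> \<beta> \<longrightarrow>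
       (\<forall>lj\<in>{l1, l2}. 0 < lambda1 l1 l2 lj R \<and> lambda1 l1 l2 lj R \<le> lambda2 l1 l2 lj R
                       \<and> lambda2 l1 l2 lj R < \<infinity>))"

end

theory Submission
  imports Defs "HOL-Complex_Analysis.Complex_Analysis"
begin

text \<open>
  The heart of the proof is a decay estimate: if at every point every normalized derivative is
  at most \<open>C\<close> times the largest one of order at most \<open>N\<close>, then it is even at most
  \<open>K \<beta>^-(k1+k2)\<close> times that maximum. Indeed, Cauchy's inequality bounds the maximum at \<open>z\<close>
  by \<open>sup |F|\<close> on a small polydisc of radius \<open>\<rho>/L(z)\<close>, while the domination and Taylor's
  expansion bound \<open>sup |F|\<close> on the polydisc of radius \<open>1/(2 L(z))\<close> by \<open>4 C\<close> times that
  maximum. So \<open>sup |F|\<close> over small polydiscs grows by at most a fixed factor per step of size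
  \<open>1/(4 L)\<close>, and the class \<open>Q2\<close> makes the number of steps needed to cross the polydisc of
  radius \<open>\<beta>/L(z)\<close> uniform. Cauchy's inequality on that polydisc gives the factor
  \<open>\<beta>^-(k1+k2)\<close>.

  Bounded index gives the domination with \<open>C = 1\<close>, and summing the geometric decay bounds the
  tail. Conversely, the inequality gives the domination with \<open>C\<close> the number of indices of
  order at most \<open>N\<close> divided by \<open>c\<close>, and the decay makes all terms of large order smaller than
  the maximum.
\<close>

section \<open>Holomorphic dependence on a parameter\<close>

lemma continuous_on_contour_integral_param:
  fixes f :: "'a::topological_space \<Rightarrow> complex \<Rightarrow> complex"
  assumes f: "continuous_on (U \<times> path_image g) (\<lambda>(x,u). f x u)" and g: "path g"
    and g': "continuous_on {0..1} (\<lambda>t. vector_derivative g (at t))"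
  shows "continuous_on U (\<lambda>x. contour_integral g (f x))"
proof -
  have eq: "contour_integral g (f x) =
      integral (cbox 0 1) (\<lambda>t. f x (g t) * vector_derivative g (at t))" for x
    by (simp add: contour_integral_integral cbox_interval)
  have "continuous_on (U \<times> {0..1}) (\<lambda>p. g (snd p))"
    by (rule continuous_on_compose2[OF g[unfolded path_def] continuous_on_snd[OF continuous_on_id]])
      auto
  then have "continuous_on (U \<times> {0..1}) (\<lambda>(x,t). (x, g t))"
    by (auto intro!: continuous_intros simp: split_beta)
  moreover have "(\<lambda>(x,t). (x, g t)) ` (U \<times> {0..1}) \<subseteq> U \<times> path_image g"
    by (auto simp: path_image_def)
  ultimately have c1: "continuous_on (U \<times> {0..1}) (\<lambda>(x,t). f x (g t))"
    using continuous_on_compose2[OF f, of "U \<times> {0..1}" "\<lambda>(x,t). (x, g t)"]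
    by (simp add: split_beta)
  have c2: "continuous_on (U \<times> {0..1}) (\<lambda>(x,t). vector_derivative g (at t))"
    using continuous_on_compose2[OF g' continuous_on_snd[OF continuous_on_id], of "U \<times> {0..1}"]
    by (auto simp: split_beta)
  have "continuous_on (U \<times> cbox 0 1) (\<lambda>(x,t). f x (g t) * vector_derivative g (at t))"
    using continuous_on_mult[OF c1 c2] by (simp add: cbox_interval split_beta)
  from integral_continuous_on_param[OF this] show ?thesis
    by (simp add: eq)
qed

lemma continuous_on_vector_derivative_circlepath:
  "continuous_on {0..1} (\<lambda>t. vector_derivative (circlepath c r) (at t))"
  by (simp add: vector_derivative_circlepath) (intro continuous_intros)

lemma deriv_eq_contour_integral_circlepath:
  assumes hol: "h holomorphic_on V" and sub: "cball v0 s \<subseteq> V" and v: "v \<in> ball v0 s"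
  shows "deriv h v =
    1 / (2 * of_real pi * \<i>) * contour_integral (circlepath v0 s) (\<lambda>u. h u / (u - v)^2)"
proof -
  have "continuous_on (cball v0 s) h"
    using holomorphic_on_imp_continuous_on holomorphic_on_subset[OF hol sub] by blast
  moreover have "h holomorphic_on ball v0 s"
    using holomorphic_on_subset[OF hol] sub ball_subset_cball by blast
  ultimately show ?thesis
    using Cauchy_derivative_integral_circlepath(2)[OF _ _ v] DERIV_imp_deriv by blast
qed

lemma contour_integral_triangle_eq_0:
  assumes "f holomorphic_on convex hull {a,b,c}"
  shows "contour_integral (linepath a b) f + contour_integral (linepath b c) f +
         contour_integral (linepath c a) f = 0"
proof -
  have segs: "closed_segment a b \<subseteq> convex hull {a,b,c}" "closed_segment b c \<subseteq> convex hull {a,b,c}"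
    "closed_segment c a \<subseteq> convex hull {a,b,c}"
    using segments_subset_convex_hull[of a b c] segments_subset_convex_hull[of b c a]
      segments_subset_convex_hull[of c a b]
    by (auto simp: insert_commute)
  have "f contour_integrable_on linepath x y" if "closed_segment x y \<subseteq> convex hull {a,b,c}" for x y
    using that assms
    by (meson contour_integrable_continuous_linepath continuous_on_subset holomorphic_on_imp_continuous_on)
  then have "(f has_contour_integral (contour_integral (linepath a b) f +
      (contour_integral (linepath b c) f + contour_integral (linepath c a) f)))
      (linepath a b +++ linepath b c +++ linepath c a)"
    using segs by (intro has_contour_integral_join has_contour_integral_integral valid_path_join) auto
  moreover have "(f has_contour_integral 0) (linepath a b +++ linepath b c +++ linepath c a)"
    using Cauchy_theorem_triangle assms by blast
  ultimately show ?thesis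
    using has_contour_integral_unique by (simp add: add.assoc)
qed

text \<open>Swap the two integrations and apply Cauchy's theorem for the triangle to the inner one.\<close>

lemma contour_integral_triangle_circlepath_param_eq_0:
  fixes f :: "complex \<Rightarrow> complex \<Rightarrow> complex"
  assumes cont: "continuous_on ((convex hull {a,b,c}) \<times> sphere v0 s) (\<lambda>(w,u). f w u)"
    and hol: "\<And>u. u \<in> sphere v0 s \<Longrightarrow> (\<lambda>w. f w u) holomorphic_on convex hull {a,b,c}"
    and s: "0 \<le> s"
  shows "contour_integral (linepath a b) (\<lambda>w. contour_integral (circlepath v0 s) (f w)) +
         contour_integral (linepath b c) (\<lambda>w. contour_integral (circlepath v0 s) (f w)) +
         contour_integral (linepath c a) (\<lambda>w. contour_integral (circlepath v0 s) (f w)) = 0"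
proof -
  let ?g = "circlepath v0 s"
  have segs: "closed_segment a b \<subseteq> convex hull {a,b,c}" "closed_segment b c \<subseteq> convex hull {a,b,c}"
    "closed_segment c a \<subseteq> convex hull {a,b,c}"
    using segments_subset_convex_hull[of a b c] segments_subset_convex_hull[of b c a]
      segments_subset_convex_hull[of c a b]
    by (auto simp: insert_commute)
  have swap: "contour_integral (linepath x y) (\<lambda>w. contour_integral ?g (f w)) =
      contour_integral ?g (\<lambda>u. contour_integral (linepath x y) (\<lambda>w. f w u))"
    if xy: "closed_segment x y \<subseteq> convex hull {a,b,c}" for x y
  proof (rule contour_integral_swap)
    have "path_image (linepath x y) \<times> path_image ?g \<subseteq> (convex hull {a, b, c}) \<times> sphere v0 s"
      using xy s by auto
    then show "continuous_on (path_image (linepath x y) \<times> path_image ?g) (\<lambda>(y1, y2). f y1 y2)"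
      by (rule continuous_on_subset[OF cont])
  qed (auto simp: continuous_on_vector_derivative_circlepath)
  have integrable: "(\<lambda>u. contour_integral (linepath x y) (\<lambda>w. f w u)) contour_integrable_on ?g"
    if xy: "closed_segment x y \<subseteq> convex hull {a,b,c}" for x y
  proof (rule contour_integrable_continuous_circlepath)
    have "continuous_on (path_image (linepath x y) \<times> sphere v0 s) (\<lambda>(w,u). f w u)"
      by (rule continuous_on_subset[OF cont]) (use xy in auto)
    then have "continuous_on (sphere v0 s \<times> path_image (linepath x y)) (\<lambda>(u,w). f w u)"
      by (rule continuous_on_swap_args)
    then show "continuous_on (path_image ?g) (\<lambda>u. contour_integral (linepath x y) (\<lambda>w. f w u))"
      using s by (intro continuous_on_contour_integral_param) auto
  qed
  have "contour_integral (linepath a b) (\<lambda>w. contour_integral ?g (f w)) +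
         contour_integral (linepath b c) (\<lambda>w. contour_integral ?g (f w)) +
         contour_integral (linepath c a) (\<lambda>w. contour_integral ?g (f w)) =
        contour_integral ?g (\<lambda>u. contour_integral (linepath a b) (\<lambda>w. f w u) +
          contour_integral (linepath b c) (\<lambda>w. f w u) + contour_integral (linepath c a) (\<lambda>w. f w u))"
    using segs swap integrable by (simp add: contour_integral_add contour_integrable_add)
  also have "\<dots> = contour_integral ?g (\<lambda>u. 0)"
    using s hol by (intro contour_integral_cong contour_integral_triangle_eq_0) auto
  finally show ?thesis
    by simp
qed

lemma deriv_param_eq_contour_integral_circlepath:
  fixes K :: "complex \<Rightarrow> complex \<Rightarrow> complex"
  assumes V: "open V"
    and cont: "continuous_on (U \<times> V) (\<lambda>(w,v). K w v)"
    and hv: "\<And>w. w \<in> U \<Longrightarrow> K w holomorphic_on V"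
    and v0: "v0 \<in> V"
  obtains s where "s > 0" "cball v0 s \<subseteq> V"
    "\<And>w v. w \<in> U \<Longrightarrow> v \<in> ball v0 s \<Longrightarrow> deriv (K w) v =
        1 / (2 * of_real pi * \<i>) * contour_integral (circlepath v0 s) (\<lambda>u. K w u / (u - v)^2)"
    "continuous_on (U \<times> ball v0 s)
       (\<lambda>p. contour_integral (circlepath v0 s) (\<lambda>u. K (fst p) u / (u - snd p)^2))"
proof -
  obtain s where s: "s > 0" "cball v0 s \<subseteq> V"
    using V v0 open_contains_cball by blast
  have "continuous_on ((U \<times> ball v0 s) \<times> sphere v0 s) ((\<lambda>(w,v). K w v) \<circ> (\<lambda>(p,u). (fst p, u)))"
  proof (rule continuous_on_compose)
    show "continuous_on ((U \<times> ball v0 s) \<times> sphere v0 s) (\<lambda>(p, u). (fst p, u))"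
      by (auto intro!: continuous_intros simp: split_beta)
    show "continuous_on ((\<lambda>(p, u). (fst p, u)) ` ((U \<times> ball v0 s) \<times> sphere v0 s)) (\<lambda>(w, v). K w v)"
      by (rule continuous_on_subset[OF cont]) (use s in auto)
  qed
  then have "continuous_on ((U \<times> ball v0 s) \<times> sphere v0 s)
      (\<lambda>x. K (fst (fst x)) (snd x) / (snd x - snd (fst x))^2)"
    by (intro continuous_on_divide) (auto simp: o_def split_beta intro!: continuous_intros)
  then have "continuous_on (U \<times> ball v0 s)
      (\<lambda>p. contour_integral (circlepath v0 s) (\<lambda>u. K (fst p) u / (u - snd p)^2))"
    using s by (intro continuous_on_contour_integral_param)
      (auto simp: continuous_on_vector_derivative_circlepath split_beta)
  with s that show ?thesis
    using deriv_eq_contour_integral_circlepath[OF hv s(2)] by blast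
qed

lemma continuous_on_deriv_param:
  fixes K :: "complex \<Rightarrow> complex \<Rightarrow> complex"
  assumes U: "open U" and V: "open V"
    and cont: "continuous_on (U \<times> V) (\<lambda>(w,v). K w v)"
    and hv: "\<And>w. w \<in> U \<Longrightarrow> K w holomorphic_on V"
  shows "continuous_on (U \<times> V) (\<lambda>(w,v). deriv (K w) v)"
proof -
  have "isCont (\<lambda>(w,v). deriv (K w) v) (w0, v0)" if "w0 \<in> U" "v0 \<in> V" for w0 v0
  proof -
    obtain s where s: "s > 0" "cball v0 s \<subseteq> V"
      and eq: "\<And>w v. w \<in> U \<Longrightarrow> v \<in> ball v0 s \<Longrightarrow> deriv (K w) v =
        1 / (2 * of_real pi * \<i>) * contour_integral (circlepath v0 s) (\<lambda>u. K w u / (u - v)^2)"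
      and c: "continuous_on (U \<times> ball v0 s)
        (\<lambda>p. contour_integral (circlepath v0 s) (\<lambda>u. K (fst p) u / (u - snd p)^2))"
      using deriv_param_eq_contour_integral_circlepath[OF V cont hv \<open>v0 \<in> V\<close>] by blast
    have "continuous_on (U \<times> ball v0 s) (\<lambda>p. 1 / (2 * of_real pi * \<i>) *
        contour_integral (circlepath v0 s) (\<lambda>u. K (fst p) u / (u - snd p)^2))"
      by (intro continuous_intros c)
    then have "continuous_on (U \<times> ball v0 s) (\<lambda>(w,v). deriv (K w) v)"
      by (rule continuous_on_eq) (auto simp: eq)
    moreover have "open (U \<times> ball v0 s)"
      using U by (simp add: open_Times)
    ultimately show ?thesis
      using continuous_on_eq_continuous_at that s by fastforce
  qed
  then show ?thesis
    by (intro continuous_at_imp_continuous_on) auto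
qed

lemma holomorphic_on_deriv_param:
  fixes K :: "complex \<Rightarrow> complex \<Rightarrow> complex"
  assumes U: "open U" and V: "open V"
    and cont: "continuous_on (U \<times> V) (\<lambda>(w,v). K w v)"
    and hw: "\<And>v. v \<in> V \<Longrightarrow> (\<lambda>w. K w v) holomorphic_on U"
    and hv: "\<And>w. w \<in> U \<Longrightarrow> K w holomorphic_on V"
    and v0: "v0 \<in> V"
  shows "(\<lambda>w. deriv (K w) v0) holomorphic_on U"
proof -
  obtain s where s: "s > 0" "cball v0 s \<subseteq> V"
    and eq: "\<And>w v. w \<in> U \<Longrightarrow> v \<in> ball v0 s \<Longrightarrow> deriv (K w) v =
      1 / (2 * of_real pi * \<i>) * contour_integral (circlepath v0 s) (\<lambda>u. K w u / (u - v)^2)"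
    and c: "continuous_on (U \<times> ball v0 s)
      (\<lambda>p. contour_integral (circlepath v0 s) (\<lambda>u. K (fst p) u / (u - snd p)^2))"
    using deriv_param_eq_contour_integral_circlepath[OF V cont hv v0] by blast
  let ?P = "\<lambda>w. contour_integral (circlepath v0 s) (\<lambda>u. K w u / (u - v0)^2)"
  have "continuous_on U ((\<lambda>p. contour_integral (circlepath v0 s) (\<lambda>u. K (fst p) u / (u - snd p)^2))
      \<circ> (\<lambda>w. (w, v0)))"
    by (rule continuous_on_compose) (auto intro!: continuous_intros continuous_on_subset[OF c] simp: s)
  then have cP: "continuous_on U ?P"
    by (simp add: o_def)
  have "?P analytic_on U"
  proof (rule Morera_triangle[OF cP U], intro impI)
    fix a b c assume abc: "convex hull {a,b,c} \<subseteq> U"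
    have "continuous_on ((convex hull {a,b,c}) \<times> sphere v0 s) (\<lambda>x. K (fst x) (snd x))"
      using continuous_on_subset[OF cont, of "(convex hull {a,b,c}) \<times> sphere v0 s"] abc s
      by (force simp: split_beta)
    then have "continuous_on ((convex hull {a,b,c}) \<times> sphere v0 s) (\<lambda>x. K (fst x) (snd x) / (snd x - v0)^2)"
      using s by (intro continuous_on_divide) (auto intro!: continuous_intros)
    moreover have "(\<lambda>w. K w u / (u - v0)^2) holomorphic_on convex hull {a,b,c}"
      if "u \<in> sphere v0 s" for u
      using that s abc by (intro holomorphic_intros holomorphic_on_subset[OF hw]) auto
    ultimately show "contour_integral (linepath a b) ?P + contour_integral (linepath b c) ?P
        + contour_integral (linepath c a) ?P = 0"
      using s by (intro contour_integral_triangle_circlepath_param_eq_0) (auto simp: split_beta)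
  qed
  then have "(\<lambda>w. 1 / (2 * of_real pi * \<i>) * ?P w) holomorphic_on U"
    by (intro holomorphic_intros analytic_imp_holomorphic)
  then show ?thesis
    by (rule holomorphic_transform) (use s eq in auto)
qed

section \<open>Partial derivatives of separately holomorphic functions\<close>

lemma bidisc_eq: "bidisc = ball 0 1 \<times> ball 0 1"
  by (auto simp: bidisc_def)

lemma analytic_bidiscD:
  assumes "analytic_bidisc F" and "w \<in> ball 0 1" and "v \<in> ball 0 1"
  shows "(\<lambda>w. F (w, v)) holomorphic_on ball 0 1" and "(\<lambda>v. F (w, v)) holomorphic_on ball 0 1"
  using assms bspec[of bidisc _ "(w, v)"] by (auto simp: analytic_bidisc_def bidisc_def)

definition pderiv_snd :: "(complex \<times> complex \<Rightarrow> complex) \<Rightarrow> nat \<Rightarrow> complex \<Rightarrow> complex \<Rightarrow> complex"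
  where "pderiv_snd F q w = (deriv ^^ q) (\<lambda>v. F (w, v))"

lemma pderiv2_eq_pderiv_snd: "pderiv2 F p q z = (deriv ^^ p) (\<lambda>w. pderiv_snd F q w (snd z)) (fst z)"
  by (simp add: pderiv2_def pderiv_snd_def)

text \<open>Joint continuity of \<open>F\<close> makes the derivatives in the second variable holomorphic in the
  first one: it allows differentiating under Cauchy's integral and applying Morera's theorem.\<close>

lemma pderiv_snd_separately_holomorphic:
  assumes F: "analytic_bidisc F"
  shows "continuous_on (ball 0 1 \<times> ball 0 1) (\<lambda>(w,v). pderiv_snd F q w v) \<and>
     (\<forall>v\<in>ball 0 1. (\<lambda>w. pderiv_snd F q w v) holomorphic_on ball 0 1) \<and>
     (\<forall>w\<in>ball 0 1. pderiv_snd F q w holomorphic_on ball 0 1)"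
proof (induction q)
  case 0
  have "continuous_on (ball 0 1 \<times> ball 0 1) F"
    using F by (simp add: analytic_bidisc_def bidisc_eq)
  then show ?case
    using analytic_bidiscD[OF F] by (simp add: pderiv_snd_def split_beta)
next
  case (Suc q)
  then have c: "continuous_on (ball 0 1 \<times> ball 0 1) (\<lambda>(w,v). pderiv_snd F q w v)"
    and hw: "\<And>v. v \<in> ball 0 1 \<Longrightarrow> (\<lambda>w. pderiv_snd F q w v) holomorphic_on ball 0 1"
    and hv: "\<And>w. w \<in> ball 0 1 \<Longrightarrow> pderiv_snd F q w holomorphic_on ball 0 1"
    by auto
  have "pderiv_snd F (Suc q) w = deriv (pderiv_snd F q w)" for w
    by (simp add: pderiv_snd_def)
  then show ?case
    using continuous_on_deriv_param[OF _ _ c hv] holomorphic_on_deriv_param[OF _ _ c hw hv]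
      holomorphic_deriv[OF hv]
    by simp
qed

lemma holomorphic_on_pderiv_snd:
  assumes "analytic_bidisc F" "v \<in> ball 0 1"
  shows "(\<lambda>w. pderiv_snd F q w v) holomorphic_on ball 0 1"
  using pderiv_snd_separately_holomorphic[OF assms(1), of q] assms(2) by blast

lemma norm_pderiv2_le:
  assumes F: "analytic_bidisc F"
    and s1: "s1 > 0" "cball (fst z) s1 \<subseteq> ball 0 1"
    and s2: "s2 > 0" "cball (snd z) s2 \<subseteq> ball 0 1"
    and bound: "\<And>w v. cmod (w - fst z) = s1 \<Longrightarrow> cmod (v - snd z) = s2 \<Longrightarrow> cmod (F (w,v)) \<le> M"
  shows "cmod (pderiv2 F p q z) \<le> fact p * fact q * M / (s1^p * s2^q)"
proof -
  have z2: "snd z \<in> ball 0 1"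
    using s2 by (metis centre_in_cball less_imp_le subsetD)
  have inner: "cmod (pderiv_snd F q w (snd z)) \<le> fact q * M / s2^q" if w: "cmod (fst z - w) = s1" for w
  proof -
    have "w \<in> ball 0 1"
      using w s1 by (auto simp: dist_norm)
    then have hol: "(\<lambda>v. F (w, v)) holomorphic_on cball (snd z) s2"
      using analytic_bidiscD(2)[OF F _ z2] s2 holomorphic_on_subset by blast
    show ?thesis unfolding pderiv_snd_def
    proof (rule Cauchy_inequality)
      show "(\<lambda>v. F (w, v)) holomorphic_on ball (snd z) s2"
        using hol ball_subset_cball holomorphic_on_subset by blast
      show "continuous_on (cball (snd z) s2) (\<lambda>v. F (w, v))"
        using hol holomorphic_on_imp_continuous_on by blast
      show "cmod (F (w, x)) \<le> M" if "cmod (snd z - x) = s2" for x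
        using bound[of w x] w that by (simp add: norm_minus_commute)
    qed (use s2 in auto)
  qed
  have hol: "(\<lambda>w. pderiv_snd F q w (snd z)) holomorphic_on cball (fst z) s1"
    using holomorphic_on_pderiv_snd[OF F z2] s1 holomorphic_on_subset by blast
  have "cmod ((deriv ^^ p) (\<lambda>w. pderiv_snd F q w (snd z)) (fst z)) \<le> fact p * (fact q * M / s2^q) / s1^p"
  proof (rule Cauchy_inequality)
    show "(\<lambda>w. pderiv_snd F q w (snd z)) holomorphic_on ball (fst z) s1"
      using hol ball_subset_cball holomorphic_on_subset by blast
    show "continuous_on (cball (fst z) s1) (\<lambda>w. pderiv_snd F q w (snd z))"
      using hol holomorphic_on_imp_continuous_on by blast
  qed (use s1 inner in auto)
  then show ?thesis
    by (simp add: pderiv2_eq_pderiv_snd field_simps)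
qed

lemma norm_le_of_sums_geometric_bound:
  fixes f :: "nat \<Rightarrow> complex"
  assumes "f sums S" "\<And>n. norm (f n) \<le> c * d^n" "0 \<le> d" "d < 1"
  shows "norm S \<le> c / (1 - d)"
proof -
  have g: "(\<lambda>n. c * d^n) sums (c * (1 / (1 - d)))"
    using assms by (intro sums_mult geometric_sums) auto
  have "norm (suminf f) \<le> (\<Sum>n. c * d^n)"
    using assms(2) g by (intro norm_suminf_le) (auto simp: sums_iff)
  then show ?thesis
    using assms(1) g by (simp add: sums_iff)
qed

lemma ball_subset_unit_ball: "ball (a::complex) (1 - cmod a) \<subseteq> ball 0 1"
  using ball_subset_ball_iff[of a "1 - cmod a" 0 1] by simp

lemma norm_le_of_Taylor_terms_le:
  assumes F: "analytic_bidisc F" and z: "z \<in> bidisc"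
    and w1: "cmod (w1 - fst z) < 1 - cmod (fst z)" and w2: "cmod (w2 - snd z) < 1 - cmod (snd z)"
    and d: "0 \<le> d" "d < 1"
    and bound: "\<And>m n. cmod (pderiv2 F m n z) / (fact m * fact n) *
        cmod (w1 - fst z)^m * cmod (w2 - snd z)^n \<le> A * d^m * d^n"
  shows "cmod (F (w1, w2)) \<le> A / (1 - d) / (1 - d)"
proof -
  have z2: "snd z \<in> ball 0 1"
    using z by (auto simp: bidisc_def)
  have b1: "ball (fst z) (1 - cmod (fst z)) \<subseteq> ball 0 1"
    and b2: "ball (snd z) (1 - cmod (snd z)) \<subseteq> ball 0 1"
    by (rule ball_subset_unit_ball)+
  have "w1 \<in> ball 0 1"
    using w1 b1 by (auto simp: dist_norm norm_minus_commute)
  then have "(\<lambda>v. F (w1, v)) holomorphic_on ball (snd z) (1 - cmod (snd z))"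
    using analytic_bidiscD(2)[OF F _ z2] b2 holomorphic_on_subset by blast
  from holomorphic_power_series[OF this] w2
  have outer: "(\<lambda>n. pderiv_snd F n w1 (snd z) / fact n * (w2 - snd z)^n) sums F (w1, w2)"
    by (simp add: pderiv_snd_def dist_norm norm_minus_commute)
  have inner: "norm (pderiv_snd F n w1 (snd z) / fact n * (w2 - snd z)^n) \<le> (A / (1 - d)) * d^n" for n
  proof -
    have "(\<lambda>w. pderiv_snd F n w (snd z)) holomorphic_on ball (fst z) (1 - cmod (fst z))"
      using holomorphic_on_pderiv_snd[OF F z2] b1 holomorphic_on_subset by blast
    from holomorphic_power_series[OF this] w1
    have "(\<lambda>m. pderiv2 F m n z / fact m * (w1 - fst z)^m) sums pderiv_snd F n w1 (snd z)"
      by (simp add: pderiv2_eq_pderiv_snd dist_norm norm_minus_commute)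
    then have "(\<lambda>m. pderiv2 F m n z / fact m * (w1 - fst z)^m * ((w2 - snd z)^n / fact n))
        sums (pderiv_snd F n w1 (snd z) * ((w2 - snd z)^n / fact n))"
      by (rule sums_mult2)
    moreover have "norm (pderiv2 F m n z / fact m * (w1 - fst z)^m * ((w2 - snd z)^n / fact n))
        \<le> (A * d^n) * d^m" for m
      using bound[of m n] by (simp add: norm_mult norm_divide norm_power field_simps)
    ultimately have "norm (pderiv_snd F n w1 (snd z) * ((w2 - snd z)^n / fact n)) \<le> (A * d^n) / (1 - d)"
      using norm_le_of_sums_geometric_bound d by blast
    then show ?thesis
      by (simp add: field_simps)
  qed
  show ?thesis
    using norm_le_of_sums_geometric_bound[OF outer inner d] by simp
qed

section \<open>Weights of class \<open>Q2\<close>\<close>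

lemma lambda1_le_ratio:
  assumes "z0 \<in> bidisc" "z \<in> bidisc \<inter> polydisc z0 (fst R / l1 z0, snd R / l2 z0)"
  shows "lambda1 l1 l2 lj R \<le> ereal (lj z / lj z0)"
  unfolding lambda1_def using assms by (meson INF_lower2 INF_lower)

lemma ratio_le_lambda2:
  assumes "z0 \<in> bidisc" "z \<in> bidisc \<inter> polydisc z0 (fst R / l1 z0, snd R / l2 z0)"
  shows "ereal (lj z / lj z0) \<le> lambda2 l1 l2 lj R"
  unfolding lambda2_def using assms by (meson SUP_upper2 SUP_upper)

lemma Q2_ratio_bounds:
  assumes Q: "Q2 \<beta> l1 l2" and r: "0 \<le> r" "r \<le> \<beta>"
  obtains \<Lambda>1 \<Lambda>2 where "\<Lambda>1 > 0"
    "\<And>z0 z. z0 \<in> bidisc \<Longrightarrow> z \<in> bidisc \<Longrightarrow> z \<in> polydisc z0 (r / l1 z0, r / l2 z0) \<Longrightarrow>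
       \<Lambda>1 \<le> l1 z / l1 z0 \<and> l1 z / l1 z0 \<le> \<Lambda>2 \<and> \<Lambda>1 \<le> l2 z / l2 z0 \<and> l2 z / l2 z0 \<le> \<Lambda>2"
proof -
  have bounds: "\<exists>a>0. \<exists>b. \<forall>z0\<in>bidisc. \<forall>z\<in>bidisc \<inter> polydisc z0 (r / l1 z0, r / l2 z0).
      a \<le> lj z / lj z0 \<and> lj z / lj z0 \<le> b" if lj: "lj \<in> {l1, l2}" for lj
  proof -
    have pos: "0 < lambda1 l1 l2 lj (r,r)" and fin: "lambda2 l1 l2 lj (r,r) < \<infinity>"
      using Q r lj unfolding Q2_def by (auto dest!: spec[of _ "(r,r)"])
    obtain a where a: "a > 0" "ereal a \<le> lambda1 l1 l2 lj (r,r)"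
    proof (cases "lambda1 l1 l2 lj (r,r)")
      case (real x)
      with pos show ?thesis
        by (intro that[of x]) auto
    qed (use pos in \<open>auto intro: that[of 1]\<close>)
    obtain b where b: "lambda2 l1 l2 lj (r,r) \<le> ereal b"
      using fin by (cases "lambda2 l1 l2 lj (r,r)") auto
    have "a \<le> lj z / lj z0 \<and> lj z / lj z0 \<le> b"
      if "z0 \<in> bidisc" "z \<in> bidisc \<inter> polydisc z0 (r / l1 z0, r / l2 z0)" for z0 z
      using order_trans[OF a(2) lambda1_le_ratio[of z0 z "(r,r)" l1 l2 lj]]
        order_trans[OF ratio_le_lambda2[of z0 z "(r,r)" l1 l2 lj] b] that
      by simp
    with a(1) show ?thesis
      by blast
  qed
  obtain a1 b1 where "a1 > 0" and bound1: "\<forall>z0\<in>bidisc. \<forall>z\<in>bidisc \<inter> polydisc z0 (r / l1 z0, r / l2 z0).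
      a1 \<le> l1 z / l1 z0 \<and> l1 z / l1 z0 \<le> b1"
    using bounds[of l1] by auto
  obtain a2 b2 where "a2 > 0" and bound2: "\<forall>z0\<in>bidisc. \<forall>z\<in>bidisc \<inter> polydisc z0 (r / l1 z0, r / l2 z0).
      a2 \<le> l2 z / l2 z0 \<and> l2 z / l2 z0 \<le> b2"
    using bounds[of l2] by auto
  show ?thesis
  proof (rule that[of "min a1 a2" "max b1 b2"])
    show "0 < min a1 a2"
      using \<open>a1 > 0\<close> \<open>a2 > 0\<close> by simp
    fix z0 z assume "z0 \<in> bidisc" "z \<in> bidisc" "z \<in> polydisc z0 (r / l1 z0, r / l2 z0)"
    then show "min a1 a2 \<le> l1 z / l1 z0 \<and> l1 z / l1 z0 \<le> max b1 b2 \<and>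
        min a1 a2 \<le> l2 z / l2 z0 \<and> l2 z / l2 z0 \<le> max b1 b2"
      using bound1 bound2 by (simp add: min_le_iff_disj le_max_iff_disj)
  qed
qed

lemma centre_in_polydisc: "0 \<le> a \<Longrightarrow> 0 \<le> b \<Longrightarrow> z \<in> polydisc z (a, b)"
  by (simp add: polydisc_def)

lemma polydisc_segment:
  fixes z w :: "complex \<times> complex" and n :: nat
  assumes p_def: "\<And>i. p i = (fst z + (of_nat i / of_nat n) * (fst w - fst z),
    snd z + (of_nat i / of_nat n) * (snd w - snd z))"
    and w: "w \<in> polydisc z R" and n: "0 < n"
  shows "p 0 = z" and "p n = w" and "i \<le> n \<Longrightarrow> p i \<in> polydisc z R"
    and "cmod (fst (p (Suc i)) - fst (p i)) = cmod (fst w - fst z) / real n"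
    and "cmod (snd (p (Suc i)) - snd (p i)) = cmod (snd w - snd z) / real n"
proof -
  show "p 0 = z" "p n = w"
    using n by (simp_all add: p_def)
  have "fst (p (Suc i)) - fst (p i) = (fst w - fst z) / of_nat n"
      "snd (p (Suc i)) - snd (p i) = (snd w - snd z) / of_nat n"
    using n by (simp_all add: p_def field_simps)
  then show "cmod (fst (p (Suc i)) - fst (p i)) = cmod (fst w - fst z) / real n"
      "cmod (snd (p (Suc i)) - snd (p i)) = cmod (snd w - snd z) / real n"
    by (simp_all add: norm_divide)
  assume "i \<le> n"
  then have f: "0 \<le> real i / real n" "real i / real n \<le> 1"
    using n by simp_all
  have "(real i / real n) * cmod (fst w - fst z) \<le> cmod (fst w - fst z)"
      "(real i / real n) * cmod (snd w - snd z) \<le> cmod (snd w - snd z)"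
    using mult_left_le_one_le[OF norm_ge_zero f] by blast+
  then show "p i \<in> polydisc z R"
    using w by (auto simp: p_def polydisc_def norm_mult norm_divide)
qed

locale bidisc_weights =
  fixes \<beta> :: real and l1 l2 :: "complex \<times> complex \<Rightarrow> real"
  assumes beta_gt_1: "\<beta> > 1"
    and l1_gt: "\<forall>z\<in>bidisc. l1 z > \<beta> / (1 - cmod (fst z))"
    and l2_gt: "\<forall>z\<in>bidisc. l2 z > \<beta> / (1 - cmod (snd z))"
    and Q2: "Q2 \<beta> l1 l2"
begin

lemma weight_gtD:
  assumes "x < 1" "\<beta> / (1 - x) < l" "0 \<le> r" "r \<le> \<beta>"
  shows "0 < l" "r / l < 1 - x"
proof -
  have "0 < \<beta> / (1 - x)"
    using assms beta_gt_1 by simp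
  then show l: "0 < l"
    using assms by linarith
  have "\<beta> / l < 1 - x"
    using assms l by (simp add: divide_less_eq mult.commute)
  moreover have "r / l \<le> \<beta> / l"
    using l assms by (simp add: divide_right_mono)
  ultimately show "r / l < 1 - x"
    by linarith
qed

lemma weights_pos: "z \<in> bidisc \<Longrightarrow> l1 z > 0 \<and> l2 z > 0"
  using weight_gtD(1)[of "cmod (fst z)" "l1 z" 0] weight_gtD(1)[of "cmod (snd z)" "l2 z" 0]
    l1_gt l2_gt beta_gt_1
  by (auto simp: bidisc_def)

lemma radius_div_weights_lt:
  "z \<in> bidisc \<Longrightarrow> 0 \<le> r \<Longrightarrow> r \<le> \<beta> \<Longrightarrow> r / l1 z < 1 - cmod (fst z) \<and> r / l2 z < 1 - cmod (snd z)"
  using weight_gtD(2)[of "cmod (fst z)" "l1 z" r] weight_gtD(2)[of "cmod (snd z)" "l2 z" r]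
    l1_gt l2_gt
  by (auto simp: bidisc_def)

lemma polydisc_radius_mono:
  assumes "z \<in> bidisc" and "r \<le> r'"
  shows "polydisc z (r / l1 z, r / l2 z) \<subseteq> polydisc z (r' / l1 z, r' / l2 z)"
proof -
  have "r / l1 z \<le> r' / l1 z" "r / l2 z \<le> r' / l2 z"
    using weights_pos[OF assms(1)] assms(2) by (auto intro!: divide_right_mono)
  then show ?thesis
    by (auto simp: polydisc_def)
qed

lemma cball_subset_unit_ball:
  assumes "z \<in> bidisc" and "0 \<le> r" "r \<le> \<beta>"
  shows "cball (fst z) (r / l1 z) \<subseteq> ball 0 1" "cball (snd z) (r / l2 z) \<subseteq> ball 0 1"
  using radius_div_weights_lt[OF assms] ball_subset_unit_ball[of "fst z"] ball_subset_unit_ball[of "snd z"]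
  by (auto simp: dist_norm norm_minus_commute)

lemma polydisc_subset_bidisc:
  assumes "z \<in> bidisc" and "0 \<le> r" "r \<le> \<beta>"
  shows "polydisc z (r / l1 z, r / l2 z) \<subseteq> bidisc"
  using cball_subset_unit_ball[OF assms]
  by (auto simp: polydisc_def bidisc_def dist_norm norm_minus_commute subset_iff)

text \<open>Because the weights change at most by the factor \<open>\<Lambda>\<close> on the polydisc of radius
  \<open>\<beta>/L(z)\<close>, it can be crossed by a fixed number of steps, each inside the polydisc of
  radius \<open>1/(4 L)\<close> around the previous point.\<close>

lemma uniform_polydisc_chain:
  obtains n :: nat where
    "\<And>z w. z \<in> bidisc \<Longrightarrow> w \<in> polydisc z (\<beta> / l1 z, \<beta> / l2 z) \<Longrightarrow>
       \<exists>p. p 0 = z \<and> p n = w \<and> (\<forall>i\<le>n. p i \<in> bidisc) \<and>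
         (\<forall>i<n. p (Suc i) \<in> polydisc (p i) ((1/4) / l1 (p i), (1/4) / l2 (p i)))"
proof -
  have "0 \<le> \<beta>"
    using beta_gt_1 by simp
  then obtain \<Lambda>' \<Lambda> where "\<Lambda>' > 0" and ratio: "\<And>z0 z. z0 \<in> bidisc \<Longrightarrow> z \<in> bidisc \<Longrightarrow>
      z \<in> polydisc z0 (\<beta> / l1 z0, \<beta> / l2 z0) \<Longrightarrow>
      \<Lambda>' \<le> l1 z / l1 z0 \<and> l1 z / l1 z0 \<le> \<Lambda> \<and> \<Lambda>' \<le> l2 z / l2 z0 \<and> l2 z / l2 z0 \<le> \<Lambda>"
    using Q2_ratio_bounds[OF Q2 _ order.refl] by blast
  obtain n :: nat where n: "max 1 (4 * \<beta> * \<Lambda>) \<le> real n"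
    using real_arch_simple by blast
  have short_step: "x / real n \<le> (1/4) / l"
    if "x \<le> \<beta> / l0" "l0 > 0" "l > 0" "l / l0 \<le> \<Lambda>" for x l0 l
  proof -
    have "4 * \<beta> * l \<le> 4 * \<beta> * (\<Lambda> * l0)"
      using that beta_gt_1 by (simp add: field_simps)
    also have "\<dots> \<le> real n * l0"
      using n that by (simp add: mult.assoc[symmetric])
    finally have "\<beta> / l0 / real n \<le> (1/4) / l"
      using that n by (simp add: field_simps)
    moreover have "x / real n \<le> \<beta> / l0 / real n"
      using that by (intro divide_right_mono) auto
    ultimately show ?thesis
      by linarith
  qed
  show thesis
  proof (rule that)
    fix z w assume z: "z \<in> bidisc" and w: "w \<in> polydisc z (\<beta> / l1 z, \<beta> / l2 z)"
    define p where "p i = (fst z + (of_nat i / of_nat n) * (fst w - fst z),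
      snd z + (of_nat i / of_nat n) * (snd w - snd z))" for i
    have "0 < n"
      using n by simp
    note segment = polydisc_segment[OF p_def w this]
    have p_bidisc: "p i \<in> bidisc" if "i \<le> n" for i
      using polydisc_subset_bidisc[OF z, of \<beta>] segment(3)[OF that] beta_gt_1 by auto
    have "p (Suc i) \<in> polydisc (p i) ((1/4) / l1 (p i), (1/4) / l2 (p i))" if "i < n" for i
    proof -
      have "cmod (fst w - fst z) \<le> \<beta> / l1 z" "cmod (snd w - snd z) \<le> \<beta> / l2 z"
        using w by (auto simp: polydisc_def)
      moreover have "l1 (p i) / l1 z \<le> \<Lambda>" "l2 (p i) / l2 z \<le> \<Lambda>"
        using ratio[OF z p_bidisc segment(3)] that by auto
      ultimately show ?thesis
        using short_step weights_pos[OF z] weights_pos[OF p_bidisc] that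
        by (simp add: polydisc_def segment(4,5))
    qed
    then show "\<exists>p. p 0 = z \<and> p n = w \<and> (\<forall>i\<le>n. p i \<in> bidisc) \<and>
        (\<forall>i<n. p (Suc i) \<in> polydisc (p i) ((1/4) / l1 (p i), (1/4) / l2 (p i)))"
      using p_bidisc segment(1,2) by blast
  qed
qed

end

section \<open>The decay estimate and the theorem\<close>

lemma sum_power_fst_add_snd_le:
  fixes x :: real
  assumes "0 \<le> x" "x < 1" "finite A"
  shows "(\<Sum>k\<in>A. x ^ (fst k + snd k)) \<le> 1 / (1 - x)^2"
proof -
  obtain n where "\<forall>i\<in>fst ` A \<union> snd ` A. i \<le> n"
    using assms(3) finite_nat_set_iff_bounded_le by blast
  then have "A \<subseteq> {..n} \<times> {..n}"
    by force
  then have "(\<Sum>k\<in>A. x ^ (fst k + snd k)) \<le> (\<Sum>k\<in>{..n} \<times> {..n}. x ^ (fst k + snd k))"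
    using assms by (intro sum_mono2) auto
  also have "\<dots> = (\<Sum>i\<le>n. x^i) * (\<Sum>j\<le>n. x^j)"
    by (simp add: sum_product sum.cartesian_product power_add case_prod_beta)
  also have "\<dots> \<le> (1 / (1 - x)) * (1 / (1 - x))"
  proof -
    have "(\<Sum>i\<le>n. x^i) \<le> (\<Sum>i. x^i)"
      using assms by (intro sum_le_suminf) auto
    then have "(\<Sum>i\<le>n. x^i) \<le> 1 / (1 - x)"
      using suminf_geometric[of x] assms by simp
    moreover have "0 \<le> (\<Sum>i\<le>n. x^i)"
      using assms by (intro sum_nonneg) auto
    ultimately show ?thesis
      using assms by (intro mult_mono) auto
  qed
  finally show ?thesis
    by (simp add: power2_eq_square)
qed

definition Lmax :: "(complex \<times> complex \<Rightarrow> real) \<Rightarrow> (complex \<times> complex \<Rightarrow> real) \<Rightarrow>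
    (complex \<times> complex \<Rightarrow> complex) \<Rightarrow> nat \<Rightarrow> complex \<times> complex \<Rightarrow> real" where
  "Lmax l1 l2 F N z = Max ((\<lambda>k. Lterm l1 l2 F k z) ` {k. fst k + snd k \<le> N})"

definition partial_sum_dominates_tail :: "(complex \<times> complex \<Rightarrow> real) \<Rightarrow> (complex \<times> complex \<Rightarrow> real) \<Rightarrow>
    (complex \<times> complex \<Rightarrow> complex) \<Rightarrow> real \<Rightarrow> nat \<Rightarrow> bool" where
  "partial_sum_dominates_tail l1 l2 F c N \<longleftrightarrow> (\<forall>z\<in>bidisc.
     (\<lambda>k. Lterm l1 l2 F k z) summable_on {k. fst k + snd k \<ge> N + 1} \<and>
     (\<Sum>k\<in>{k. fst k + snd k \<le> N}. Lterm l1 l2 F k z)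
       \<ge> c * (\<Sum>\<^sub>\<infinity>k\<in>{k. fst k + snd k \<ge> N + 1}. Lterm l1 l2 F k z))"

lemma finite_order_le: "finite {k::nat \<times> nat. fst k + snd k \<le> N}"
  by (rule finite_subset[of _ "{..N} \<times> {..N}"]) auto

lemma Lterm_le_Lmax: "fst k + snd k \<le> N \<Longrightarrow> Lterm l1 l2 F k z \<le> Lmax l1 l2 F N z"
  unfolding Lmax_def using finite_order_le by (intro Max_ge) auto

lemma Lmax_le: "(\<And>k. fst k + snd k \<le> N \<Longrightarrow> Lterm l1 l2 F k z \<le> X) \<Longrightarrow> Lmax l1 l2 F N z \<le> X"
  unfolding Lmax_def using finite_order_le by (subst Max_le_iff) (auto intro!: exI[of _ 0])

lemma Lmax_nonneg: "0 \<le> Lmax l1 l2 F N z"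
  using Lterm_le_Lmax[of "(0,0)" N l1 l2 F z] by (simp add: Lterm_def) (meson norm_ge_zero order_trans)

lemma Lmax_mono: "N \<le> M \<Longrightarrow> Lmax l1 l2 F N z \<le> Lmax l1 l2 F M z"
  by (rule Lmax_le) (auto intro: Lterm_le_Lmax)

lemma Lmax_le_sum:
  assumes "\<And>k. 0 \<le> Lterm l1 l2 F k z"
  shows "Lmax l1 l2 F N z \<le> (\<Sum>k\<in>{k. fst k + snd k \<le> N}. Lterm l1 l2 F k z)"
proof -
  have "Lmax l1 l2 F N z \<in> (\<lambda>k. Lterm l1 l2 F k z) ` {k. fst k + snd k \<le> N}"
    unfolding Lmax_def using finite_order_le by (intro Max_in) (auto intro!: exI[of _ 0])
  then obtain k where "fst k + snd k \<le> N" "Lmax l1 l2 F N z = Lterm l1 l2 F k z"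
    by auto
  then show ?thesis
    using assms finite_order_le by (auto intro!: member_le_sum)
qed

lemma bounded_L_index_joint_iff_Lmax:
  "bounded_L_index_joint l1 l2 F \<longleftrightarrow>
    (\<exists>N. \<forall>z\<in>bidisc. \<forall>k. Lterm l1 l2 F k z \<le> Lmax l1 l2 F N z)"
  by (simp add: bounded_L_index_joint_def Lmax_def)

locale bidisc_L_index = bidisc_weights +
  fixes F :: "complex \<times> complex \<Rightarrow> complex"
  assumes analytic: "analytic_bidisc F"
begin

lemma Lterm_nonneg: "z \<in> bidisc \<Longrightarrow> 0 \<le> Lterm l1 l2 F k z"
  using weights_pos[of z] by (simp add: Lterm_def)

lemma Lterm_le_sup_div_power:
  assumes z: "z \<in> bidisc" and r: "0 < r" "r \<le> \<beta>"
    and M: "\<And>w. w \<in> polydisc z (r / l1 z, r / l2 z) \<Longrightarrow> cmod (F w) \<le> M"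
  shows "Lterm l1 l2 F k z \<le> M / r ^ (fst k + snd k)"
proof -
  obtain p q where k: "k = (p,q)"
    by (cases k)
  have l: "l1 z > 0" "l2 z > 0"
    using weights_pos[OF z] by auto
  have "cmod (pderiv2 F p q z) \<le> fact p * fact q * M / ((r / l1 z)^p * (r / l2 z)^q)"
  proof (rule norm_pderiv2_le[OF analytic])
    show "cball (fst z) (r / l1 z) \<subseteq> ball 0 1" "cball (snd z) (r / l2 z) \<subseteq> ball 0 1"
      using cball_subset_unit_ball[OF z] r by auto
    show "cmod (F (w, v)) \<le> M" if "cmod (w - fst z) = r / l1 z" "cmod (v - snd z) = r / l2 z" for w v
      using that by (intro M) (auto simp: polydisc_def)
  qed (use r l in auto)
  moreover have "0 < fact p * fact q * l1 z ^ p * l2 z ^ q"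
    using l by simp
  ultimately have "Lterm l1 l2 F k z \<le> (fact p * fact q * M / ((r / l1 z)^p * (r / l2 z)^q)) /
      (fact p * fact q * l1 z ^ p * l2 z ^ q)"
    unfolding Lterm_def k fst_conv snd_conv by (intro divide_right_mono) auto
  also have "\<dots> = M / r ^ (fst k + snd k)"
    using l r by (simp add: k power_add field_simps)
  finally show ?thesis .
qed

lemma Lmax_le_sup:
  assumes z: "z \<in> bidisc" and r: "0 < r" "r \<le> 1" "r \<le> \<beta>"
    and M: "\<And>w. w \<in> polydisc z (r / l1 z, r / l2 z) \<Longrightarrow> cmod (F w) \<le> M"
  shows "Lmax l1 l2 F N z \<le> M / r ^ N"
proof (rule Lmax_le)
  fix k :: "nat \<times> nat" assume k: "fst k + snd k \<le> N"
  have "cmod (F z) \<le> M"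
    using weights_pos[OF z] r by (intro M centre_in_polydisc) auto
  then have "0 \<le> M"
    by (rule order_trans[OF norm_ge_zero])
  then have "M / r ^ (fst k + snd k) \<le> M / r ^ N"
    using r k by (intro divide_left_mono power_decreasing mult_pos_pos zero_less_power) auto
  then show "Lterm l1 l2 F k z \<le> M / r ^ N"
    using Lterm_le_sup_div_power[OF z r(1,3) M] by (rule order_trans[rotated])
qed

lemma norm_le_of_Lterm_le:
  assumes z: "z \<in> bidisc" and d: "0 \<le> d" "d < 1"
    and A: "\<And>k. Lterm l1 l2 F k z \<le> A"
    and w: "w \<in> polydisc z (d / l1 z, d / l2 z)"
  shows "cmod (F w) \<le> A / (1 - d) / (1 - d)"
proof -
  have l: "l1 z > 0" "l2 z > 0"
    using weights_pos[OF z] by auto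
  have dw: "cmod (fst w - fst z) \<le> d / l1 z" "cmod (snd w - snd z) \<le> d / l2 z"
    using w by (auto simp: polydisc_def)
  have e: "l1 z * cmod (fst w - fst z) \<le> d" "l2 z * cmod (snd w - snd z) \<le> d"
    using dw l by (simp_all add: field_simps)
  have "cmod (F (fst w, snd w)) \<le> A / (1 - d) / (1 - d)"
  proof (rule norm_le_of_Taylor_terms_le[OF analytic z _ _ d])
    show "cmod (fst w - fst z) < 1 - cmod (fst z)" "cmod (snd w - snd z) < 1 - cmod (snd z)"
      using dw radius_div_weights_lt[OF z, of d] d beta_gt_1 by auto
    fix m n
    have powers: "(l1 z * cmod (fst w - fst z)) ^ m * (l2 z * cmod (snd w - snd z)) ^ n \<le> d^m * d^n"
      using e l d by (intro mult_mono power_mono) auto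
    have "Lterm l1 l2 F (m,n) z * ((l1 z * cmod (fst w - fst z)) ^ m * (l2 z * cmod (snd w - snd z)) ^ n)
        \<le> A * (d^m * d^n)"
      by (rule mult_mono[OF A powers]) (use order_trans[OF Lterm_nonneg[OF z] A] l in auto)
    moreover have "cmod (pderiv2 F m n z) / (fact m * fact n) * cmod (fst w - fst z) ^ m * cmod (snd w - snd z) ^ n
        = Lterm l1 l2 F (m,n) z * ((l1 z * cmod (fst w - fst z)) ^ m * (l2 z * cmod (snd w - snd z)) ^ n)"
      using l by (simp add: Lterm_def field_simps)
    ultimately show "cmod (pderiv2 F m n z) / (fact m * fact n) * cmod (fst w - fst z) ^ m *
        cmod (snd w - snd z) ^ n \<le> A * d ^ m * d ^ n"
      by (simp add: mult.assoc)
  qed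
  then show ?thesis
    by simp
qed

context
  fixes C :: real and N :: nat and \<rho> :: real
  assumes C: "0 \<le> C"
    and dominated: "\<And>z k. z \<in> bidisc \<Longrightarrow> Lterm l1 l2 F k z \<le> C * Lmax l1 l2 F N z"
    and \<rho>: "0 < \<rho>" "\<rho> \<le> 1/4"
    and ratio_lower: "\<And>z w. z \<in> bidisc \<Longrightarrow> w \<in> bidisc \<Longrightarrow>
      w \<in> polydisc z ((1/2) / l1 z, (1/2) / l2 z) \<Longrightarrow> 4 * \<rho> \<le> l1 w / l1 z \<and> 4 * \<rho> \<le> l2 w / l2 z"
begin

lemma polydisc_around_near_point_subset:
  assumes z: "z \<in> bidisc" and w: "w \<in> polydisc z ((1/4) / l1 z, (1/4) / l2 z)"
  shows "polydisc w (\<rho> / l1 w, \<rho> / l2 w) \<subseteq> polydisc z ((1/2) / l1 z, (1/2) / l2 z)"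
proof
  have l: "l1 z > 0" "l2 z > 0"
    using weights_pos[OF z] by auto
  have "w \<in> polydisc z ((1/2) / l1 z, (1/2) / l2 z)"
    using w polydisc_radius_mono[OF z, of "1/4" "1/2"] by auto
  moreover have "w \<in> bidisc"
    using polydisc_subset_bidisc[OF z, of "1/4"] w beta_gt_1 by auto
  ultimately have ratio: "4 * \<rho> \<le> l1 w / l1 z" "4 * \<rho> \<le> l2 w / l2 z"
    using ratio_lower[OF z] by auto
  have "\<rho> / lw \<le> (1/4) / lz" if "4 * \<rho> \<le> lw / lz" "lz > 0" for lw lz
  proof -
    have "4 * \<rho> * lz \<le> lw"
      using that by (simp add: field_simps)
    moreover have "0 < 4 * \<rho> * lz"
      using that \<rho> by simp
    ultimately show ?thesis
      using that by (simp add: field_simps)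
  qed
  then have "\<rho> / l1 w \<le> (1/4) / l1 z" "\<rho> / l2 w \<le> (1/4) / l2 z"
    using ratio l by auto
  moreover fix u assume "u \<in> polydisc w (\<rho> / l1 w, \<rho> / l2 w)"
  ultimately show "u \<in> polydisc z ((1/2) / l1 z, (1/2) / l2 z)"
    using w norm_triangle_ineq[of "fst u - fst w" "fst w - fst z"]
      norm_triangle_ineq[of "snd u - snd w" "snd w - snd z"]
    by (auto simp: polydisc_def)
qed

lemma sup_bound_step:
  assumes z: "z \<in> bidisc" and M: "\<And>u. u \<in> polydisc z (\<rho> / l1 z, \<rho> / l2 z) \<Longrightarrow> cmod (F u) \<le> M"
    and w: "w \<in> polydisc z ((1/4) / l1 z, (1/4) / l2 z)" and u: "u \<in> polydisc w (\<rho> / l1 w, \<rho> / l2 w)"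
  shows "cmod (F u) \<le> 4 * C / \<rho> ^ N * M"
proof -
  have "Lmax l1 l2 F N z \<le> M / \<rho> ^ N"
    using \<rho> beta_gt_1 by (intro Lmax_le_sup[OF z _ _ _ M]) auto
  then have "Lterm l1 l2 F k z \<le> C * (M / \<rho> ^ N)" for k
    using dominated[OF z, of k] C by (meson mult_left_mono order_trans)
  moreover have "u \<in> polydisc z ((1/2) / l1 z, (1/2) / l2 z)"
    using polydisc_around_near_point_subset[OF z w] u by blast
  ultimately have "cmod (F u) \<le> C * (M / \<rho> ^ N) / (1 - 1/2) / (1 - 1/2)"
    by (intro norm_le_of_Lterm_le[OF z]) auto
  then show ?thesis
    by (simp add: mult_ac)
qed

lemma sup_bound_polydisc:
  obtains K where "0 \<le> K"
    "\<And>z w M. z \<in> bidisc \<Longrightarrow> (\<And>u. u \<in> polydisc z (\<rho> / l1 z, \<rho> / l2 z) \<Longrightarrow> cmod (F u) \<le> M) \<Longrightarrow>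
      w \<in> polydisc z (\<beta> / l1 z, \<beta> / l2 z) \<Longrightarrow> cmod (F w) \<le> K * M"
proof -
  obtain n where chain: "\<And>z w. z \<in> bidisc \<Longrightarrow> w \<in> polydisc z (\<beta> / l1 z, \<beta> / l2 z) \<Longrightarrow>
       \<exists>p. p 0 = z \<and> p n = w \<and> (\<forall>i\<le>n. p i \<in> bidisc) \<and>
         (\<forall>i<n. p (Suc i) \<in> polydisc (p i) ((1/4) / l1 (p i), (1/4) / l2 (p i)))"
    using uniform_polydisc_chain by blast
  define K0 where "K0 = 4 * C / \<rho> ^ N"
  show thesis
  proof (rule that[of "K0 ^ n"])
    show "0 \<le> K0 ^ n"
      using C \<rho> by (simp add: K0_def)
    fix z w M
    assume z: "z \<in> bidisc" and M: "\<And>u. u \<in> polydisc z (\<rho> / l1 z, \<rho> / l2 z) \<Longrightarrow> cmod (F u) \<le> M"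
      and w: "w \<in> polydisc z (\<beta> / l1 z, \<beta> / l2 z)"
    obtain p where p: "p 0 = z" "p n = w" "\<And>i. i \<le> n \<Longrightarrow> p i \<in> bidisc"
      "\<And>i. i < n \<Longrightarrow> p (Suc i) \<in> polydisc (p i) ((1/4) / l1 (p i), (1/4) / l2 (p i))"
      using chain[OF z w] by blast
    have "\<forall>u\<in>polydisc (p i) (\<rho> / l1 (p i), \<rho> / l2 (p i)). cmod (F u) \<le> K0 ^ i * M" if "i \<le> n" for i
      using that
    proof (induction i)
      case 0
      then show ?case
        using M p(1) by simp
    next
      case (Suc i)
      then have "i < n" "p i \<in> bidisc"
        and IH: "\<And>u. u \<in> polydisc (p i) (\<rho> / l1 (p i), \<rho> / l2 (p i)) \<Longrightarrow> cmod (F u) \<le> K0 ^ i * M"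
        using p(3) by auto
      then show ?case
        using sup_bound_step[OF \<open>p i \<in> bidisc\<close> IH p(4)] by (auto simp: K0_def[symmetric] mult.assoc)
    qed
    moreover have "w \<in> polydisc w (\<rho> / l1 w, \<rho> / l2 w)"
      using weights_pos[of w] p(3)[of n] \<rho> by (intro centre_in_polydisc) (auto simp: p(2))
    ultimately show "cmod (F w) \<le> K0 ^ n * M"
      using p(2) by blast
  qed
qed

end

lemma Lterm_le_geometric:
  assumes C: "0 \<le> C"
    and dominated: "\<And>z k. z \<in> bidisc \<Longrightarrow> Lterm l1 l2 F k z \<le> C * Lmax l1 l2 F N z"
  obtains K where "0 \<le> K"
    "\<And>z k. z \<in> bidisc \<Longrightarrow> Lterm l1 l2 F k z \<le> K * Lmax l1 l2 F N z / \<beta> ^ (fst k + snd k)"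
proof -
  have "0 \<le> (1/2 :: real)" "1/2 \<le> \<beta>"
    using beta_gt_1 by auto
  then obtain \<Lambda> \<Lambda>' where "\<Lambda> > 0" and ratio: "\<And>z0 z. z0 \<in> bidisc \<Longrightarrow> z \<in> bidisc \<Longrightarrow>
      z \<in> polydisc z0 ((1/2) / l1 z0, (1/2) / l2 z0) \<Longrightarrow>
      \<Lambda> \<le> l1 z / l1 z0 \<and> l1 z / l1 z0 \<le> \<Lambda>' \<and> \<Lambda> \<le> l2 z / l2 z0 \<and> l2 z / l2 z0 \<le> \<Lambda>'"
    using Q2_ratio_bounds[OF Q2] by blast
  define \<rho> where "\<rho> = min (\<Lambda> / 4) (1 / 4)"
  have \<rho>: "0 < \<rho>" "\<rho> \<le> 1/4"
    using \<open>\<Lambda> > 0\<close> by (auto simp: \<rho>_def)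
  have ratio_lower: "4 * \<rho> \<le> l1 w / l1 z \<and> 4 * \<rho> \<le> l2 w / l2 z"
    if "z \<in> bidisc" "w \<in> bidisc" "w \<in> polydisc z ((1/2) / l1 z, (1/2) / l2 z)" for z w
    using ratio[OF that] by (auto simp: \<rho>_def)
  obtain K where K: "0 \<le> K" and sup: "\<And>z w M. z \<in> bidisc \<Longrightarrow>
      (\<And>u. u \<in> polydisc z (\<rho> / l1 z, \<rho> / l2 z) \<Longrightarrow> cmod (F u) \<le> M) \<Longrightarrow>
      w \<in> polydisc z (\<beta> / l1 z, \<beta> / l2 z) \<Longrightarrow> cmod (F w) \<le> K * M"
    using sup_bound_polydisc[OF C dominated \<rho> ratio_lower] by blast
  show thesis
  proof (rule that[of "K * (4 * C)"])
    show "0 \<le> K * (4 * C)"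
      using K C by simp
    fix z k assume z: "z \<in> bidisc"
    have l: "l1 z > 0" "l2 z > 0"
      using weights_pos[OF z] by auto
    have "cmod (F u) \<le> 4 * C * Lmax l1 l2 F N z" if "u \<in> polydisc z (\<rho> / l1 z, \<rho> / l2 z)" for u
    proof -
      have "u \<in> polydisc z ((1/2) / l1 z, (1/2) / l2 z)"
        using that \<rho> polydisc_radius_mono[OF z, of \<rho> "1/2"] by auto
      then have "cmod (F u) \<le> C * Lmax l1 l2 F N z / (1 - 1/2) / (1 - 1/2)"
        by (intro norm_le_of_Lterm_le[OF z _ _ dominated[OF z]]) auto
      then show ?thesis
        by simp
    qed
    then have "Lterm l1 l2 F k z \<le> K * (4 * C * Lmax l1 l2 F N z) / \<beta> ^ (fst k + snd k)"
      using beta_gt_1 by (intro Lterm_le_sup_div_power[OF z] sup[OF z]) auto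
    then show "Lterm l1 l2 F k z \<le> K * (4 * C) * Lmax l1 l2 F N z / \<beta> ^ (fst k + snd k)"
      by (simp add: mult_ac)
  qed
qed

lemma Lterm_tail_bound:
  assumes K: "0 \<le> K" and z: "z \<in> bidisc"
    and decay: "\<And>k. Lterm l1 l2 F k z \<le> K * Lmax l1 l2 F N z / \<beta> ^ (fst k + snd k)"
  shows "(\<lambda>k. Lterm l1 l2 F k z) summable_on A"
    and "(\<Sum>\<^sub>\<infinity>k\<in>A. Lterm l1 l2 F k z) \<le> K * Lmax l1 l2 F N z / (1 - 1/\<beta>)^2"
proof -
  have x: "0 \<le> 1/\<beta>" "1/\<beta> < 1"
    using beta_gt_1 by auto
  have finite_sums: "sum (\<lambda>k. Lterm l1 l2 F k z) S \<le> K * Lmax l1 l2 F N z / (1 - 1/\<beta>)^2"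
    if "finite S" for S
  proof -
    have "sum (\<lambda>k. Lterm l1 l2 F k z) S \<le> sum (\<lambda>k. K * Lmax l1 l2 F N z * (1/\<beta>) ^ (fst k + snd k)) S"
      using decay by (intro sum_mono) (simp add: power_one_over)
    also have "\<dots> = K * Lmax l1 l2 F N z * (\<Sum>k\<in>S. (1/\<beta>) ^ (fst k + snd k))"
      by (simp add: sum_distrib_left)
    also have "\<dots> \<le> K * Lmax l1 l2 F N z * (1 / (1 - 1/\<beta>)^2)"
      using sum_power_fst_add_snd_le[OF x that] K Lmax_nonneg by (intro mult_left_mono) auto
    finally show ?thesis
      by simp
  qed
  show summable: "(\<lambda>k. Lterm l1 l2 F k z) summable_on A"
    using Lterm_nonneg[OF z] finite_sums
    by (intro nonneg_bdd_above_summable_on bdd_aboveI[of _ "K * Lmax l1 l2 F N z / (1 - 1/\<beta>)^2"]) auto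
  show "(\<Sum>\<^sub>\<infinity>k\<in>A. Lterm l1 l2 F k z) \<le> K * Lmax l1 l2 F N z / (1 - 1/\<beta>)^2"
    using summable finite_sums by (rule infsum_le_finite_sums)
qed

lemma bounded_L_index_imp_partial_sum_dominates_tail:
  assumes "bounded_L_index_joint l1 l2 F"
  obtains c N where "c > 0" "partial_sum_dominates_tail l1 l2 F c N"
proof -
  obtain N where dominated: "\<And>z k. z \<in> bidisc \<Longrightarrow> Lterm l1 l2 F k z \<le> 1 * Lmax l1 l2 F N z"
    using assms by (auto simp: bounded_L_index_joint_iff_Lmax)
  obtain K where K: "0 \<le> K"
    and decay: "\<And>z k. z \<in> bidisc \<Longrightarrow> Lterm l1 l2 F k z \<le> K * Lmax l1 l2 F N z / \<beta> ^ (fst k + snd k)"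
    by (rule Lterm_le_geometric[of 1 N]) (use dominated in auto)
  define Q where "Q = K / (1 - 1/\<beta>)^2"
  have Q: "0 \<le> Q"
    using K by (simp add: Q_def)
  show thesis
  proof (rule that[of "1 / (Q + 1)" N])
    show "0 < 1 / (Q + 1)"
      using Q by simp
    have "(1 / (Q + 1)) * (\<Sum>\<^sub>\<infinity>k\<in>{k. fst k + snd k \<ge> N + 1}. Lterm l1 l2 F k z)
        \<le> (\<Sum>k\<in>{k. fst k + snd k \<le> N}. Lterm l1 l2 F k z)" if z: "z \<in> bidisc" for z
    proof -
      have "(\<Sum>\<^sub>\<infinity>k\<in>{k. fst k + snd k \<ge> N + 1}. Lterm l1 l2 F k z) \<le> K * Lmax l1 l2 F N z / (1 - 1/\<beta>)^2"
        by (rule Lterm_tail_bound(2)[OF K z decay[OF z]])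
      also have "\<dots> = Q * Lmax l1 l2 F N z"
        by (simp add: Q_def)
      also have "\<dots> \<le> (Q + 1) * Lmax l1 l2 F N z"
        using Lmax_nonneg[of l1 l2 F N z] by (simp add: distrib_right)
      also have "\<dots> \<le> (Q + 1) * (\<Sum>k\<in>{k. fst k + snd k \<le> N}. Lterm l1 l2 F k z)"
        using Lmax_le_sum[OF Lterm_nonneg[OF z]] Q by (intro mult_left_mono) auto
      finally show ?thesis
        using Q by (simp add: field_simps)
    qed
    then show "partial_sum_dominates_tail l1 l2 F (1 / (Q + 1)) N"
      using Lterm_tail_bound(1)[OF K _ decay] by (simp add: partial_sum_dominates_tail_def)
  qed
qed

lemma Lterm_le_Lmax_of_partial_sum_dominates_tail:
  assumes c: "c > 0" and dom: "partial_sum_dominates_tail l1 l2 F c N" and z: "z \<in> bidisc"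
  shows "Lterm l1 l2 F k z \<le> max 1 (card {k::nat \<times> nat. fst k + snd k \<le> N} / c) * Lmax l1 l2 F N z"
    (is "_ \<le> ?C * _")
proof (cases "fst k + snd k \<le> N")
  case True
  have "1 * Lmax l1 l2 F N z \<le> ?C * Lmax l1 l2 F N z"
    by (intro mult_right_mono Lmax_nonneg) simp
  then show ?thesis
    using Lterm_le_Lmax[OF True, of l1 l2 F z] by simp
next
  case False
  let ?tail = "\<Sum>\<^sub>\<infinity>k\<in>{k. fst k + snd k \<ge> N + 1}. Lterm l1 l2 F k z"
  have summable: "(\<lambda>k. Lterm l1 l2 F k z) summable_on {k. fst k + snd k \<ge> N + 1}"
    and tail: "c * ?tail \<le> (\<Sum>k\<in>{k. fst k + snd k \<le> N}. Lterm l1 l2 F k z)"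
    using dom z by (auto simp: partial_sum_dominates_tail_def)
  have "Lterm l1 l2 F k z \<le> ?tail"
    using finite_sum_le_infsum[OF summable, of "{k}"] False Lterm_nonneg[OF z] by auto
  then have "c * Lterm l1 l2 F k z \<le> c * ?tail"
    using c by simp
  also have "\<dots> \<le> (\<Sum>k\<in>{k. fst k + snd k \<le> N}. Lterm l1 l2 F k z)"
    by (rule tail)
  also have "\<dots> \<le> card {k::nat \<times> nat. fst k + snd k \<le> N} * Lmax l1 l2 F N z"
    by (rule sum_bounded_above) (auto intro: Lterm_le_Lmax)
  finally have "Lterm l1 l2 F k z \<le> card {k::nat \<times> nat. fst k + snd k \<le> N} / c * Lmax l1 l2 F N z"
    using c by (simp add: field_simps)
  also have "\<dots> \<le> ?C * Lmax l1 l2 F N z"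
    using Lmax_nonneg by (intro mult_right_mono) auto
  finally show ?thesis .
qed

lemma bounded_L_index_of_geometric_decay:
  assumes decay: "\<And>z k. z \<in> bidisc \<Longrightarrow> Lterm l1 l2 F k z \<le> K * Lmax l1 l2 F N z / \<beta> ^ (fst k + snd k)"
  shows "bounded_L_index_joint l1 l2 F"
proof -
  obtain n where n: "K < \<beta> ^ n"
    using real_arch_pow[OF beta_gt_1] by blast
  have "Lterm l1 l2 F k z \<le> Lmax l1 l2 F (max N n) z" if z: "z \<in> bidisc" for z k
  proof (cases "fst k + snd k \<le> max N n")
    case True
    then show ?thesis
      by (rule Lterm_le_Lmax)
  next
    case False
    have "\<beta> ^ n \<le> \<beta> ^ (fst k + snd k)"
      using False beta_gt_1 by (intro power_increasing) auto
    then have "K \<le> \<beta> ^ (fst k + snd k)"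
      using n by linarith
    then have "K * Lmax l1 l2 F N z \<le> Lmax l1 l2 F N z * \<beta> ^ (fst k + snd k)"
      by (subst mult.commute) (rule mult_right_mono[OF _ Lmax_nonneg])
    then have "K * Lmax l1 l2 F N z / \<beta> ^ (fst k + snd k) \<le> Lmax l1 l2 F N z"
      using beta_gt_1 by (simp add: pos_divide_le_eq)
    then show ?thesis
      using decay[OF z, of k] Lmax_mono[of N "max N n" l1 l2 F z] by auto
  qed
  then show ?thesis
    unfolding bounded_L_index_joint_iff_Lmax by blast
qed

lemma partial_sum_dominates_tail_imp_bounded_L_index:
  assumes "c > 0" and "partial_sum_dominates_tail l1 l2 F c N"
  shows "bounded_L_index_joint l1 l2 F"
proof -
  obtain K where "\<And>z k. z \<in> bidisc \<Longrightarrow> Lterm l1 l2 F k z \<le> K * Lmax l1 l2 F N z / \<beta> ^ (fst k + snd k)"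
    by (rule Lterm_le_geometric[of "max 1 (card {k::nat \<times> nat. fst k + snd k \<le> N} / c)" N])
      (use Lterm_le_Lmax_of_partial_sum_dominates_tail[OF assms] in auto)
  then show ?thesis
    by (rule bounded_L_index_of_geometric_decay)
qed

end

theorem theorem7:
  fixes \<beta> :: real and l1 l2 :: "complex \<times> complex \<Rightarrow> real"
    and F :: "complex \<times> complex \<Rightarrow> complex"
  assumes "\<beta> > 1"
    and "continuous_on bidisc l1" and "continuous_on bidisc l2"
    and "\<forall>z\<in>bidisc. l1 z > \<beta> / (1 - cmod (fst z))"
    and "\<forall>z\<in>bidisc. l2 z > \<beta> / (1 - cmod (snd z))"
    and "Q2 \<beta> l1 l2"
    and "analytic_bidisc F"
  shows "bounded_L_index_joint l1 l2 F \<longleftrightarrow>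
    (\<exists>c>0. \<exists>N::nat. \<forall>z\<in>bidisc.
       (\<lambda>k. Lterm l1 l2 F k z) summable_on {k. fst k + snd k \<ge> N + 1} \<and>
       (\<Sum>k\<in>{k. fst k + snd k \<le> N}. Lterm l1 l2 F k z)
         \<ge> c * (\<Sum>\<^sub>\<infinity>k\<in>{k. fst k + snd k \<ge> N + 1}. Lterm l1 l2 F k z))"
proof -
  interpret bidisc_L_index \<beta> l1 l2 F
    using assms by unfold_locales auto
  show ?thesis
    unfolding partial_sum_dominates_tail_def[symmetric]
  proof
    assume "bounded_L_index_joint l1 l2 F"
    then obtain c N where "c > 0" "partial_sum_dominates_tail l1 l2 F c N"
      by (rule bounded_L_index_imp_partial_sum_dominates_tail)
    then show "\<exists>c>0. \<exists>N. partial_sum_dominates_tail l1 l2 F c N"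
      by blast
  qed (auto intro: partial_sum_dominates_tail_imp_bounded_L_index)
qed

end
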